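(* Let $V$ be a commutative valuation domain with quotient field $F$, $K/F$ a finite Galois extension with group $G$, $S$ the integral closure of $V$ in $K$, and $f:G\times G\to S\setminus\{0\}$ a normalized $2$-cocycle. For $\sigma\in G$ let $I_\sigma=\bigcap M$, the intersection over those maximal ideals $M$ of $S$ with $f(\sigma,\sigma^{-1})\notin M$. Then $J_G(A_f)=\sum_{\sigma\in G}I_\sigma x_\sigma$.
   Context: $V$ has arbitrary Krull dimension. A normalized 2-cocycle satisfies $\sigma(f(\tau,\gamma))f(\sigma,\tau\gamma)=f(\sigma,\tau)f(\sigma\tau,\gamma)$, $f(1,\sigma)=f(\sigma,1)=1$; values need not be units. $A_f=\bigoplus_{\sigma\in G}Sx_\sigma$ (free left $S$-module) with $(sx_\sigma)(tx_\tau)=s\,\sigma(t)f(\sigma,\tau)x_{\sigma\tau}$, $G$-graded with components $Sx_\sigma$; $J_G(A_f)$ is its graded Jacobson radical (intersection of graded left ideals maximal among proper graded left ideals). An empty intersection of ideals is $S$. *)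

theory Defs
  imports "HOL-Computational_Algebra.Polynomial"
begin

text \<open>All fields are embedded in an ambient field of type 'k (the field K).
  Subrings/subfields are carrier sets; automorphisms are functions 'k => 'k.\<close>

definition subring :: "'k::field set \<Rightarrow> bool" where
  "subring R \<longleftrightarrow> 0 \<in> R \<and> 1 \<in> R \<and> (\<forall>x\<in>R. \<forall>y\<in>R. x + y \<in> R \<and> x - y \<in> R \<and> x * y \<in> R)"

definition subfield :: "'k::field set \<Rightarrow> bool" where
  "subfield F \<longleftrightarrow> subring F \<and> (\<forall>x\<in>F. x \<noteq> 0 \<longrightarrow> inverse x \<in> F)"

definition valuation_domain_with_qf :: "'k::field set \<Rightarrow> 'k set \<Rightarrow> bool" where
  "valuation_domain_with_qf V F \<longleftrightarrow> subring V \<and> subfield F \<and> V \<subseteq> F \<and>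
     F = {a / b | a b. a \<in> V \<and> b \<in> V \<and> b \<noteq> 0} \<and>
     (\<forall>x\<in>F. x \<noteq> 0 \<longrightarrow> x \<in> V \<or> inverse x \<in> V)"

definition field_aut :: "('k::field \<Rightarrow> 'k) \<Rightarrow> bool" where
  "field_aut \<sigma> \<longleftrightarrow> bij \<sigma> \<and> \<sigma> 1 = 1 \<and> (\<forall>x y. \<sigma> (x + y) = \<sigma> x + \<sigma> y \<and> \<sigma> (x * y) = \<sigma> x * \<sigma> y)"

definition gal :: "'k::field set \<Rightarrow> ('k \<Rightarrow> 'k) set" where
  "gal F = {\<sigma>. field_aut \<sigma> \<and> (\<forall>x\<in>F. \<sigma> x = x)}"

definition finite_ext :: "'k::field set \<Rightarrow> bool" where
  "finite_ext F \<longleftrightarrow> (\<exists>B. finite B \<and> (\<forall>y. \<exists>c. (\<forall>b\<in>B. c b \<in> F) \<and> y = (\<Sum>b\<in>B. c b * b)))"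

definition finite_galois :: "'k::field set \<Rightarrow> bool" where
  "finite_galois F \<longleftrightarrow> subfield F \<and> finite_ext F \<and> {x. \<forall>\<sigma>\<in>gal F. \<sigma> x = x} = F"

definition integral_closure :: "'k::field set \<Rightarrow> 'k set" where
  "integral_closure V = {x. \<exists>p. lead_coeff p = 1 \<and> (\<forall>i. coeff p i \<in> V) \<and> poly p x = 0}"

definition ideal_in :: "'k::field set \<Rightarrow> 'k set \<Rightarrow> bool" where
  "ideal_in S I \<longleftrightarrow> I \<subseteq> S \<and> 0 \<in> I \<and> (\<forall>x\<in>I. \<forall>y\<in>I. x + y \<in> I) \<and> (\<forall>s\<in>S. \<forall>x\<in>I. s * x \<in> I)"

definition maximal_ideal_in :: "'k::field set \<Rightarrow> 'k set \<Rightarrow> bool" where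
  "maximal_ideal_in S M \<longleftrightarrow> ideal_in S M \<and> M \<noteq> S \<and>
     (\<forall>J. ideal_in S J \<and> M \<subseteq> J \<and> J \<noteq> S \<longrightarrow> J = M)"

definition normalized_cocycle ::
  "('k::field \<Rightarrow> 'k) set \<Rightarrow> 'k set \<Rightarrow> (('k \<Rightarrow> 'k) \<Rightarrow> ('k \<Rightarrow> 'k) \<Rightarrow> 'k) \<Rightarrow> bool" where
  "normalized_cocycle G S f \<longleftrightarrow>
     (\<forall>\<sigma>\<in>G. \<forall>\<tau>\<in>G. f \<sigma> \<tau> \<in> S - {0}) \<and>
     (\<forall>\<sigma>\<in>G. \<forall>\<tau>\<in>G. \<forall>\<gamma>\<in>G. \<sigma> (f \<tau> \<gamma>) * f \<sigma> (\<tau> \<circ> \<gamma>) = f \<sigma> \<tau> * f (\<sigma> \<circ> \<tau>) \<gamma>) \<and>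
     (\<forall>\<sigma>\<in>G. f id \<sigma> = 1 \<and> f \<sigma> id = 1)"

definition I_sig :: "'k::field set \<Rightarrow> (('k \<Rightarrow> 'k) \<Rightarrow> ('k \<Rightarrow> 'k) \<Rightarrow> 'k) \<Rightarrow> ('k \<Rightarrow> 'k) \<Rightarrow> 'k set" where
  "I_sig S f \<sigma> = S \<inter> \<Inter>{M. maximal_ideal_in S M \<and> f \<sigma> (inv \<sigma>) \<notin> M}"

text \<open>Crossed product A_f: an element sum_sigma a(sigma) x_sigma is represented by the
  coefficient function a, with a sigma in S for sigma in G and 0 outside G.\<close>
definition cp_carrier :: "('k::field \<Rightarrow> 'k) set \<Rightarrow> 'k set \<Rightarrow> ((('k \<Rightarrow> 'k) \<Rightarrow> 'k) set)" where
  "cp_carrier G S = {a. (\<forall>\<sigma>\<in>G. a \<sigma> \<in> S) \<and> (\<forall>\<sigma>. \<sigma> \<notin> G \<longrightarrow> a \<sigma> = 0)}"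

definition cp_add :: "(('k::field \<Rightarrow> 'k) \<Rightarrow> 'k) \<Rightarrow> (('k \<Rightarrow> 'k) \<Rightarrow> 'k) \<Rightarrow> (('k \<Rightarrow> 'k) \<Rightarrow> 'k)" where
  "cp_add a b = (\<lambda>\<rho>. a \<rho> + b \<rho>)"

definition cp_mult :: "('k::field \<Rightarrow> 'k) set \<Rightarrow> (('k \<Rightarrow> 'k) \<Rightarrow> ('k \<Rightarrow> 'k) \<Rightarrow> 'k) \<Rightarrow>
    (('k \<Rightarrow> 'k) \<Rightarrow> 'k) \<Rightarrow> (('k \<Rightarrow> 'k) \<Rightarrow> 'k) \<Rightarrow> (('k \<Rightarrow> 'k) \<Rightarrow> 'k)" where
  "cp_mult G f a b = (\<lambda>\<rho>. \<Sum>\<sigma>\<in>G. \<Sum>\<tau>\<in>G. if \<sigma> \<circ> \<tau> = \<rho> then a \<sigma> * \<sigma> (b \<tau>) * f \<sigma> \<tau> else 0)"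

definition hcomp :: "(('k::field \<Rightarrow> 'k) \<Rightarrow> 'k) \<Rightarrow> ('k \<Rightarrow> 'k) \<Rightarrow> (('k \<Rightarrow> 'k) \<Rightarrow> 'k)" where
  "hcomp a \<sigma> = (\<lambda>\<tau>. if \<tau> = \<sigma> then a \<sigma> else 0)"

definition graded_left_ideal ::
  "('k::field \<Rightarrow> 'k) set \<Rightarrow> 'k set \<Rightarrow> (('k \<Rightarrow> 'k) \<Rightarrow> ('k \<Rightarrow> 'k) \<Rightarrow> 'k) \<Rightarrow> (('k \<Rightarrow> 'k) \<Rightarrow> 'k) set \<Rightarrow> bool" where
  "graded_left_ideal G S f L \<longleftrightarrow> L \<subseteq> cp_carrier G S \<and> (\<lambda>_. 0) \<in> L \<and>
     (\<forall>a\<in>L. \<forall>b\<in>L. cp_add a b \<in> L \<and> (\<lambda>\<rho>. a \<rho> - b \<rho>) \<in> L) \<and>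
     (\<forall>c\<in>cp_carrier G S. \<forall>a\<in>L. cp_mult G f c a \<in> L) \<and>
     (\<forall>a\<in>L. \<forall>\<sigma>\<in>G. hcomp a \<sigma> \<in> L)"

definition maximal_graded_left_ideal ::
  "('k::field \<Rightarrow> 'k) set \<Rightarrow> 'k set \<Rightarrow> (('k \<Rightarrow> 'k) \<Rightarrow> ('k \<Rightarrow> 'k) \<Rightarrow> 'k) \<Rightarrow> (('k \<Rightarrow> 'k) \<Rightarrow> 'k) set \<Rightarrow> bool" where
  "maximal_graded_left_ideal G S f L \<longleftrightarrow> graded_left_ideal G S f L \<and> L \<noteq> cp_carrier G S \<and>
     (\<forall>L'. graded_left_ideal G S f L' \<and> L \<subseteq> L' \<and> L' \<noteq> cp_carrier G S \<longrightarrow> L' = L)"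

text \<open>Graded Jacobson radical J_G(A_f) (empty intersection = A_f).\<close>
definition graded_jacobson ::
  "('k::field \<Rightarrow> 'k) set \<Rightarrow> 'k set \<Rightarrow> (('k \<Rightarrow> 'k) \<Rightarrow> ('k \<Rightarrow> 'k) \<Rightarrow> 'k) \<Rightarrow> (('k \<Rightarrow> 'k) \<Rightarrow> 'k) set" where
  "graded_jacobson G S f = cp_carrier G S \<inter> \<Inter>{L. maximal_graded_left_ideal G S f L}"

end

theory Submission
  imports Defs "Jordan_Normal_Form.Char_Poly"
begin

text \<open>A maximal graded left ideal L of A_f is determined by its degree-id part
  {s. s x_id \<in> L}, a maximal ideal M of S: L consists of those a for which
  x_{\<rho>^-1} (a_\<rho> x_\<rho>) = \<rho>^-1(a_\<rho>) f(\<rho>^-1,\<rho>) x_id lies in M x_id for every \<rho>, and conversely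
  every maximal ideal M arises this way. Applying \<rho>, the condition reads
  a_\<rho> f(\<rho>,\<rho>^-1) \<in> \<rho>(M); as M runs through the maximal ideals of S so does \<rho>(M), and since
  maximal ideals are prime, a_\<rho> lies in all of them exactly when it lies in every maximal
  ideal avoiding f(\<rho>,\<rho>^-1), i.e. in I_\<rho>. The Galois setting enters only through the
  facts that S is a ring (the determinant trick) stable under the finite group G.\<close>

text \<open>HOL-Algebra, loaded with the matrix library, binds inv to the group inverse;
  in this theory inv is Hilbert_Choice.inv as in the definitions.\<close>
unbundle no m_inv_syntax

section \<open>The integral closure is a ring\<close>

lemma subring_0 [simp]: "subring V \<Longrightarrow> 0 \<in> V"
  and subring_1 [simp]: "subring V \<Longrightarrow> 1 \<in> V"
  and subring_add: "subring V \<Longrightarrow> x \<in> V \<Longrightarrow> y \<in> V \<Longrightarrow> x + y \<in> V"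
  and subring_diff: "subring V \<Longrightarrow> x \<in> V \<Longrightarrow> y \<in> V \<Longrightarrow> x - y \<in> V"
  and subring_mult: "subring V \<Longrightarrow> x \<in> V \<Longrightarrow> y \<in> V \<Longrightarrow> x * y \<in> V"
  by (auto simp: subring_def)

lemma subring_uminus: "subring V \<Longrightarrow> x \<in> V \<Longrightarrow> - x \<in> V"
  using subring_diff[of V 0 x] by simp

lemma subring_sum: "subring V \<Longrightarrow> (\<And>x. x \<in> A \<Longrightarrow> g x \<in> V) \<Longrightarrow> sum g A \<in> V"
  by (induction A rule: infinite_finite_induct) (auto intro: subring_add)

definition poly_over :: "'k::field set \<Rightarrow> 'k poly \<Rightarrow> bool" where
  "poly_over V p \<longleftrightarrow> (\<forall>i. coeff p i \<in> V)"

lemma poly_over_0: "subring V \<Longrightarrow> poly_over V 0"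
  by (simp add: poly_over_def)

lemma poly_over_add: "subring V \<Longrightarrow> poly_over V p \<Longrightarrow> poly_over V q \<Longrightarrow> poly_over V (p + q)"
  by (simp add: poly_over_def subring_add)

lemma poly_over_mult: "subring V \<Longrightarrow> poly_over V p \<Longrightarrow> poly_over V q \<Longrightarrow> poly_over V (p * q)"
  by (simp add: poly_over_def coeff_mult subring_sum subring_mult)

lemma poly_over_uminus: "subring V \<Longrightarrow> poly_over V p \<Longrightarrow> poly_over V (- p)"
  by (simp add: poly_over_def subring_uminus)

lemma poly_over_sum: "subring V \<Longrightarrow> (\<And>x. x \<in> A \<Longrightarrow> poly_over V (g x)) \<Longrightarrow> poly_over V (sum g A)"
  by (induction A rule: infinite_finite_induct)
     (auto intro: poly_over_add poly_over_0)

lemma poly_over_1: "subring V \<Longrightarrow> poly_over V 1"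
  by (simp add: poly_over_def coeff_1)

lemma poly_over_prod: "subring V \<Longrightarrow> (\<And>x. x \<in> A \<Longrightarrow> poly_over V (g x)) \<Longrightarrow> poly_over V (prod g A)"
  by (induction A rule: infinite_finite_induct) (auto intro: poly_over_mult poly_over_1)

lemma poly_over_char_poly:
  assumes V: "subring V" and A: "A \<in> carrier_mat n n" and AV: "\<forall>i<n. \<forall>j<n. A $$ (i,j) \<in> V"
  shows "poly_over V (char_poly A)"
proof -
  have entry: "poly_over V (char_poly_matrix A $$ (i,j))" if "i < n" "j < n" for i j
  proof -
    have "char_poly_matrix A $$ (i,j) = [:- A $$ (i,j), of_bool (i = j):]"
      using A that by (simp add: char_poly_matrix_def)
    then show ?thesis using AV that V
      by (simp add: poly_over_def coeff_pCons subring_uminus split: nat.split)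
  qed
  have sign: "poly_over V (signof p * q)" if "poly_over V q" for p q
    using that by (cases p rule: sign_cases) (auto intro: poly_over_uminus[OF V])
  show ?thesis
    unfolding char_poly_def det_def'[OF char_poly_matrix_closed[OF A]]
    by (intro poly_over_sum[OF V] sign poly_over_prod[OF V] entry) (auto dest: permutes_in_image)
qed

definition gen_module :: "'k::field set \<Rightarrow> nat \<Rightarrow> (nat \<Rightarrow> 'k) \<Rightarrow> 'k set" where
  "gen_module V N v = {\<Sum>k<N. c k * v k | c. \<forall>k<N. c k \<in> V}"

lemma gen_module_0: "subring V \<Longrightarrow> 0 \<in> gen_module V N v"
  unfolding gen_module_def by (rule CollectI, rule exI[of _ "\<lambda>_. 0"]) simp

lemma gen_module_generator: "subring V \<Longrightarrow> k < N \<Longrightarrow> v k \<in> gen_module V N v"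
  unfolding gen_module_def
  by (rule CollectI, rule exI[of _ "\<lambda>l. of_bool (l = k)"]) simp

lemma gen_module_add:
  assumes V: "subring V" and "s \<in> gen_module V N v" "t \<in> gen_module V N v"
  shows "s + t \<in> gen_module V N v"
proof -
  obtain c d where "\<forall>k<N. c k \<in> V" "s = (\<Sum>k<N. c k * v k)" "\<forall>k<N. d k \<in> V" "t = (\<Sum>k<N. d k * v k)"
    using assms by (auto simp: gen_module_def)
  then show ?thesis unfolding gen_module_def
    by (intro CollectI exI[of _ "\<lambda>k. c k + d k"]) (simp add: V subring_add sum.distrib distrib_right)
qed

lemma gen_module_smult:
  assumes V: "subring V" and r: "r \<in> V" and "s \<in> gen_module V N v"
  shows "r * s \<in> gen_module V N v"
proof -
  obtain c where "\<forall>k<N. c k \<in> V" "s = (\<Sum>k<N. c k * v k)"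
    using assms by (auto simp: gen_module_def)
  then show ?thesis unfolding gen_module_def
    by (intro CollectI exI[of _ "\<lambda>k. r * c k"]) (simp add: V r subring_mult sum_distrib_left mult.assoc)
qed

lemma gen_module_sum:
  "subring V \<Longrightarrow> (\<And>x. x \<in> A \<Longrightarrow> g x \<in> gen_module V N v) \<Longrightarrow> sum g A \<in> gen_module V N v"
  by (induction A rule: infinite_finite_induct) (auto intro: gen_module_add gen_module_0)

lemma gen_module_mult_closed:
  assumes V: "subring V" and z: "\<forall>k<N. z * v k \<in> gen_module V N v" and s: "s \<in> gen_module V N v"
  shows "z * s \<in> gen_module V N v"
proof -
  obtain c where c: "\<forall>k<N. c k \<in> V" "s = (\<Sum>k<N. c k * v k)"
    using s by (auto simp: gen_module_def)
  have "z * s = (\<Sum>k<N. c k * (z * v k))" using c by (simp add: sum_distrib_left ac_simps)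
  also have "\<dots> \<in> gen_module V N v"
  proof (rule gen_module_sum[OF V])
    fix k assume "k \<in> {..<N}"
    then show "c k * (z * v k) \<in> gen_module V N v" using c z by (simp add: gen_module_smult[OF V])
  qed
  finally show ?thesis .
qed

text \<open>The determinant trick: a matrix over V with eigenvalue z has z as a root of its monic
  characteristic polynomial.\<close>
lemma integral_if_eigenvector:
  fixes N :: nat
  assumes V: "subring V" and a: "\<forall>k<N. \<forall>l<N. a k l \<in> V"
    and eq: "\<forall>k<N. z * v k = (\<Sum>l<N. a k l * v l)" and nz: "\<exists>k<N. v k \<noteq> 0"
  shows "z \<in> integral_closure V"
proof -
  define A where "A = mat N N (\<lambda>(k,l). a k l)"
  have A: "A \<in> carrier_mat N N" by (simp add: A_def)
  have "A *\<^sub>v vec N v = z \<cdot>\<^sub>v vec N v"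
  proof (rule eq_vecI)
    fix k assume "k < dim_vec (z \<cdot>\<^sub>v vec N v)"
    then have k: "k < N" by simp
    have "(A *\<^sub>v vec N v) $ k = (\<Sum>l<N. a k l * v l)"
      using k by (simp add: A_def scalar_prod_def atLeast0LessThan)
    then show "(A *\<^sub>v vec N v) $ k = (z \<cdot>\<^sub>v vec N v) $ k" using eq k by simp
  qed (simp add: A_def)
  moreover have "vec N v \<noteq> 0\<^sub>v N" using nz by (auto simp: vec_eq_iff)
  ultimately have "eigenvalue A z"
    unfolding eigenvalue_def eigenvector_def using A by (intro exI[of _ "vec N v"]) auto
  then have "poly (char_poly A) z = 0" using eigenvalue_root_char_poly[OF A] by simp
  moreover have "lead_coeff (char_poly A) = 1" using degree_monic_char_poly[OF A] by simp
  moreover have "poly_over V (char_poly A)" using poly_over_char_poly[OF V A] a by (simp add: A_def)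
  ultimately show ?thesis unfolding integral_closure_def poly_over_def by blast
qed

lemma integral_if_stabilizes_gen_module:
  assumes V: "subring V" and one: "1 \<in> gen_module V N v"
    and stable: "\<forall>k<N. z * v k \<in> gen_module V N v"
  shows "z \<in> integral_closure V"
proof -
  have "\<forall>k\<in>{..<N}. \<exists>c. (\<forall>l<N. c l \<in> V) \<and> z * v k = (\<Sum>l<N. c l * v l)"
    using stable by (auto simp: gen_module_def)
  then obtain a where "\<forall>k\<in>{..<N}. (\<forall>l<N. a k l \<in> V) \<and> z * v k = (\<Sum>l<N. a k l * v l)"
    by (metis bchoice)
  moreover have "\<exists>k<N. v k \<noteq> 0"
  proof -
    obtain c where "1 = (\<Sum>k<N. c k * v k)" using one by (auto simp: gen_module_def)
    then have "(\<Sum>k<N. c k * v k) \<noteq> 0" by simp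
    then show ?thesis using sum.neutral[of "{..<N}" "\<lambda>k. c k * v k"] by auto
  qed
  ultimately show ?thesis by (intro integral_if_eigenvector[OF V, of N a]) auto
qed

lemma monic_root_degree_pos:
  fixes p :: "'k::field poly"
  assumes "lead_coeff p = 1" "poly p x = 0"
  shows "0 < degree p"
  using assms by (cases "degree p") (auto simp: poly_altdef)

lemma monic_root_power_degree:
  fixes p :: "'k::field poly"
  assumes "lead_coeff p = 1" "poly p x = 0"
  shows "x ^ degree p = (\<Sum>l<degree p. - coeff p l * x ^ l)"
proof -
  have "0 = (\<Sum>i\<le>degree p. coeff p i * x ^ i)" by (metis assms(2) poly_altdef)
  also have "\<dots> = (\<Sum>i<degree p. coeff p i * x ^ i) + x ^ degree p"
    using assms(1) by (simp add: lessThan_Suc_atMost[symmetric])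
  finally show ?thesis by (simp add: sum_negf eq_neg_iff_add_eq_0 add.commute)
qed

lemma powers_in_gen_module:
  assumes V: "subring V" and p: "lead_coeff p = 1" "poly_over V p" "poly p x = 0"
  shows "x ^ i \<in> gen_module V (degree p) (\<lambda>l. x ^ l)"
proof -
  let ?M = "gen_module V (degree p) (\<lambda>l. x ^ l)"
  have stable: "\<forall>l<degree p. x * x ^ l \<in> ?M"
  proof (intro allI impI)
    fix l assume l: "l < degree p"
    show "x * x ^ l \<in> ?M"
    proof (cases "Suc l < degree p")
      case True
      then show ?thesis using gen_module_generator[OF V True, of "power x"] by simp
    next
      case False
      then have "Suc l = degree p" using l by simp
      then have "x * x ^ l = x ^ degree p" by (metis power_Suc)
      also have "\<dots> = (\<Sum>l<degree p. - coeff p l * x ^ l)" by (rule monic_root_power_degree[OF p(1,3)])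
      also have "\<dots> \<in> ?M"
      proof (rule gen_module_sum[OF V])
        fix k assume "k \<in> {..<degree p}"
        then show "- coeff p k * x ^ k \<in> ?M" using p(2) unfolding poly_over_def
          by (intro gen_module_smult[OF V] subring_uminus[OF V] gen_module_generator[OF V]) auto
      qed
      finally show ?thesis .
    qed
  qed
  show ?thesis
  proof (induction i)
    case 0
    show ?case using gen_module_generator[OF V monic_root_degree_pos[OF p(1,3)], of "power x"] by simp
  next
    case (Suc i)
    then show ?case using gen_module_mult_closed[OF V stable] by simp
  qed
qed

lemma monomials_in_gen_module:
  assumes V: "subring V"
    and x: "x ^ i \<in> gen_module V m (\<lambda>l. x ^ l)" and y: "y ^ j \<in> gen_module V n (\<lambda>l. y ^ l)"
  shows "x ^ i * y ^ j \<in> gen_module V (m * n) (\<lambda>k. x ^ (k div n) * y ^ (k mod n))"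
proof -
  let ?M = "gen_module V (m * n) (\<lambda>k. x ^ (k div n) * y ^ (k mod n))"
  obtain c where c: "\<forall>l<m. c l \<in> V" "x ^ i = (\<Sum>l<m. c l * x ^ l)"
    using x by (auto simp: gen_module_def)
  obtain d where d: "\<forall>r<n. d r \<in> V" "y ^ j = (\<Sum>r<n. d r * y ^ r)"
    using y by (auto simp: gen_module_def)
  have generator: "x ^ l * y ^ r \<in> ?M" if "l < m" "r < n" for l r
  proof -
    have "l * n + r < (l + 1) * n" using that by simp
    also have "\<dots> \<le> m * n" using that by (intro mult_le_mono1) simp
    moreover have "(l * n + r) div n = l" "(l * n + r) mod n = r" using that by auto
    ultimately show ?thesis
      using gen_module_generator[OF V, of "l * n + r" "m * n" "\<lambda>k. x ^ (k div n) * y ^ (k mod n)"]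
      by simp
  qed
  have "x ^ i * y ^ j = (\<Sum>l<m. \<Sum>r<n. (c l * d r) * (x ^ l * y ^ r))"
    unfolding c(2) d(2) sum_product by (intro sum.cong refl) (simp add: ac_simps)
  also have "\<dots> \<in> ?M"
  proof (intro gen_module_sum[OF V])
    fix l r assume "l \<in> {..<m}" "r \<in> {..<n}"
    then show "c l * d r * (x ^ l * y ^ r) \<in> ?M"
      using c(1) d(1) generator by (simp add: gen_module_smult[OF V] subring_mult[OF V])
  qed
  finally show ?thesis .
qed

lemma integral_closure_pair_module:
  assumes V: "subring V" and x: "x \<in> integral_closure V" and y: "y \<in> integral_closure V"
  obtains N v where "\<And>i j. x ^ i * y ^ j \<in> gen_module V N v" "\<forall>k<N. \<exists>i j. v k = x ^ i * y ^ j"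
proof -
  obtain p where p: "lead_coeff p = 1" "poly_over V p" "poly p x = 0"
    using x by (auto simp: integral_closure_def poly_over_def)
  obtain q where q: "lead_coeff q = 1" "poly_over V q" "poly q y = 0"
    using y by (auto simp: integral_closure_def poly_over_def)
  show ?thesis
    using monomials_in_gen_module[OF V powers_in_gen_module[OF V p] powers_in_gen_module[OF V q]]
    by (rule that) auto
qed

lemma integral_closure_add:
  assumes V: "subring V" and "x \<in> integral_closure V" "y \<in> integral_closure V"
  shows "x + y \<in> integral_closure V"
proof -
  obtain N v where M: "\<And>i j. x ^ i * y ^ j \<in> gen_module V N v"
    and v: "\<forall>k<N. \<exists>i j. v k = x ^ i * y ^ j"
    using integral_closure_pair_module[OF assms] by blast
  have "(x + y) * v k \<in> gen_module V N v" if "k < N" for k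
  proof -
    obtain i j where "v k = x ^ i * y ^ j" using v \<open>k < N\<close> by blast
    then have "(x + y) * v k = x ^ Suc i * y ^ j + x ^ i * y ^ Suc j" by (simp add: algebra_simps)
    then show ?thesis using gen_module_add[OF V M M] by metis
  qed
  moreover have "1 \<in> gen_module V N v" using M[of 0 0] by simp
  ultimately show ?thesis by (intro integral_if_stabilizes_gen_module[OF V]) auto
qed

lemma integral_closure_mult:
  assumes V: "subring V" and "x \<in> integral_closure V" "y \<in> integral_closure V"
  shows "x * y \<in> integral_closure V"
proof -
  obtain N v where M: "\<And>i j. x ^ i * y ^ j \<in> gen_module V N v"
    and v: "\<forall>k<N. \<exists>i j. v k = x ^ i * y ^ j"
    using integral_closure_pair_module[OF assms] by blast
  have "x * y * v k \<in> gen_module V N v" if "k < N" for k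
  proof -
    obtain i j where "v k = x ^ i * y ^ j" using v \<open>k < N\<close> by blast
    then have "x * y * v k = x ^ Suc i * y ^ Suc j" by (simp add: algebra_simps)
    then show ?thesis using M by metis
  qed
  moreover have "1 \<in> gen_module V N v" using M[of 0 0] by simp
  ultimately show ?thesis by (intro integral_if_stabilizes_gen_module[OF V]) auto
qed

lemma subset_integral_closure:
  assumes V: "subring V" shows "V \<subseteq> integral_closure V"
proof
  fix a assume a: "a \<in> V"
  have "\<forall>i. coeff [:- a, 1:] i \<in> V" using V a by (simp add: coeff_pCons subring_uminus split: nat.split)
  then show "a \<in> integral_closure V" unfolding integral_closure_def by force
qed

lemma subring_integral_closure:
  assumes V: "subring V" shows "subring (integral_closure V)"
  unfolding subring_def
proof (intro conjI ballI)
  show "0 \<in> integral_closure V" "1 \<in> integral_closure V"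
    using subset_integral_closure[OF V] V by auto
  fix x y assume x: "x \<in> integral_closure V" and y: "y \<in> integral_closure V"
  show "x + y \<in> integral_closure V" "x * y \<in> integral_closure V"
    using integral_closure_add[OF V x y] integral_closure_mult[OF V x y] by auto
  have "- 1 \<in> integral_closure V"
    using subset_integral_closure[OF V] subring_uminus[OF V subring_1[OF V]] by blast
  then have "x + (- 1) * y \<in> integral_closure V"
    by (intro integral_closure_add[OF V x] integral_closure_mult[OF V _ y])
  then show "x - y \<in> integral_closure V" by simp
qed

section \<open>Field automorphisms and the Galois group\<close>

lemma field_aut_field_isom:
  assumes "field_aut \<sigma>" shows "field_isom \<sigma>"
proof -
  have add: "\<sigma> (x + y) = \<sigma> x + \<sigma> y" and mult: "\<sigma> (x * y) = \<sigma> x * \<sigma> y"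
    and one: "\<sigma> 1 = 1" and bij: "bij \<sigma>" for x y
    using assms by (auto simp: field_aut_def)
  have zero: "\<sigma> 0 = 0" using add[of 0 0] by (metis add.right_neutral add_left_cancel)
  have "\<sigma> x = 0 \<Longrightarrow> x = 0" for x using zero bij by (metis bij_def injD)
  then show ?thesis by unfold_locales (use add mult one zero bij in \<open>auto simp: bij_def\<close>)
qed

lemma field_aut_hom_simps:
  assumes "field_aut \<sigma>"
  shows "\<sigma> 0 = 0" "\<sigma> 1 = 1" "\<sigma> (x + y) = \<sigma> x + \<sigma> y" "\<sigma> (x - y) = \<sigma> x - \<sigma> y"
    "\<sigma> (x * y) = \<sigma> x * \<sigma> y" "\<sigma> (x ^ n) = \<sigma> x ^ n" "\<sigma> (sum g A) = (\<Sum>a\<in>A. \<sigma> (g a))"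
proof -
  interpret field_isom \<sigma> using assms by (rule field_aut_field_isom)
  show "\<sigma> 0 = 0" "\<sigma> 1 = 1" "\<sigma> (x + y) = \<sigma> x + \<sigma> y" "\<sigma> (x - y) = \<sigma> x - \<sigma> y"
    "\<sigma> (x * y) = \<sigma> x * \<sigma> y" "\<sigma> (x ^ n) = \<sigma> x ^ n" "\<sigma> (sum g A) = (\<Sum>a\<in>A. \<sigma> (g a))"
    by (simp_all add: hom_distribs)
qed

lemma field_aut_inv_cancel:
  assumes "field_aut \<sigma>"
  shows "inv \<sigma> (\<sigma> x) = x" "\<sigma> (inv \<sigma> x) = x"
  using assms by (simp_all add: field_aut_def bij_is_inj bij_is_surj inv_f_f surj_f_inv_f)

lemma field_aut_inv:
  assumes "field_aut \<sigma>" shows "field_aut (inv \<sigma>)"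
proof -
  interpret field_isom \<sigma> using assms by (rule field_aut_field_isom)
  have "bij \<sigma>" using assms by (simp add: field_aut_def)
  then show ?thesis by (simp add: field_aut_def bij_imp_bij_inv inv.hom_add inv.hom_mult)
qed

lemma field_aut_comp: "field_aut \<sigma> \<Longrightarrow> field_aut \<tau> \<Longrightarrow> field_aut (\<sigma> \<circ> \<tau>)"
  by (auto simp: field_aut_def intro: bij_comp)

lemma field_aut_poly:
  assumes "field_aut \<sigma>" and "\<forall>i. \<sigma> (coeff p i) = coeff p i"
  shows "\<sigma> (poly p x) = poly p (\<sigma> x)"
  using assms by (simp add: poly_altdef field_aut_hom_simps)

lemma id_in_gal: "id \<in> gal F"
  by (simp add: gal_def field_aut_def)

lemma inv_in_gal:
  assumes "\<sigma> \<in> gal F" shows "inv \<sigma> \<in> gal F"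
proof -
  have \<sigma>: "field_aut \<sigma>" "\<forall>x\<in>F. \<sigma> x = x" using assms by (auto simp: gal_def)
  then have "inv \<sigma> x = x" if "x \<in> F" for x using that field_aut_inv_cancel(1)[OF \<sigma>(1), of x] by simp
  then show ?thesis using \<sigma> by (simp add: gal_def field_aut_inv)
qed

lemma comp_in_gal: "\<sigma> \<in> gal F \<Longrightarrow> \<tau> \<in> gal F \<Longrightarrow> \<sigma> \<circ> \<tau> \<in> gal F"
  by (simp add: gal_def field_aut_comp)

lemma gal_integral_closure:
  assumes "\<sigma> \<in> gal F" "V \<subseteq> F" "x \<in> integral_closure V"
  shows "\<sigma> x \<in> integral_closure V"
proof -
  obtain p where p: "lead_coeff p = 1" "\<forall>i. coeff p i \<in> V" "poly p x = 0"
    using assms(3) by (auto simp: integral_closure_def)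
  have "field_aut \<sigma>" "\<forall>i. \<sigma> (coeff p i) = coeff p i"
    using assms(1,2) p(2) by (auto simp: gal_def)
  then have "poly p (\<sigma> x) = 0" using p(3) by (metis field_aut_poly field_aut_hom_simps(1))
  then show ?thesis using p unfolding integral_closure_def by blast
qed

lemma finite_ext_integral:
  assumes F: "subfield F" and fe: "finite_ext F"
  shows "y \<in> integral_closure F"
proof -
  have FR: "subring F" using F by (simp add: subfield_def)
  obtain B where B: "finite B" and span: "\<forall>y. \<exists>c. (\<forall>b\<in>B. c b \<in> F) \<and> y = (\<Sum>b\<in>B. c b * b)"
    using fe by (auto simp: finite_ext_def)
  obtain xs where xs: "distinct xs" "set xs = B" using B finite_distinct_list by blast
  have all: "z \<in> gen_module F (length xs) (nth xs)" for z
  proof -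
    obtain c where c: "\<forall>b\<in>B. c b \<in> F" "z = (\<Sum>b\<in>B. c b * b)" using span by blast
    have "z = (\<Sum>l<length xs. c (xs ! l) * xs ! l)"
      using c(2) sum.reindex_bij_betw[OF bij_betw_nth[OF xs(1) refl xs(2)[symmetric]], of "\<lambda>b. c b * b"]
      by simp
    moreover have "\<forall>l<length xs. c (xs ! l) \<in> F" using c(1) xs(2) by auto
    ultimately show ?thesis unfolding gen_module_def by (intro CollectI exI[of _ "\<lambda>l. c (xs ! l)"]) simp
  qed
  show ?thesis by (rule integral_if_stabilizes_gen_module[OF FR, of "length xs" "nth xs"]) (simp_all add: all)
qed

lemma finite_gal:
  assumes F: "subfield F" and fe: "finite_ext F"
  shows "finite (gal F)"
proof -
  obtain B where B: "finite B" and span: "\<forall>y. \<exists>c. (\<forall>b\<in>B. c b \<in> F) \<and> y = (\<Sum>b\<in>B. c b * b)"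
    using fe by (auto simp: finite_ext_def)
  have "\<forall>b. \<exists>p. lead_coeff p = 1 \<and> (\<forall>i. coeff p i \<in> F) \<and> poly p b = 0"
    using finite_ext_integral[OF F fe] by (auto simp: integral_closure_def)
  then obtain P where P: "\<And>b. lead_coeff (P b) = 1" "\<And>b i. coeff (P b) i \<in> F" "\<And>b. poly (P b) b = 0"
    by metis
  define R where "R b = {x. poly (P b) x = 0}" for b
  have "finite (R b)" for b
    unfolding R_def using P(1)[of b] by (intro poly_roots_finite) auto
  then have "finite (Pi\<^sub>E B R)" using B by (intro finite_PiE) auto
  moreover have "(\<lambda>\<sigma>. restrict \<sigma> B) ` gal F \<subseteq> Pi\<^sub>E B R"
  proof
    fix g assume "g \<in> (\<lambda>\<sigma>. restrict \<sigma> B) ` gal F"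
    then obtain \<sigma> where \<sigma>: "\<sigma> \<in> gal F" "g = restrict \<sigma> B" by blast
    have "\<sigma> b \<in> R b" for b
    proof -
      have "field_aut \<sigma>" "\<forall>i. \<sigma> (coeff (P b) i) = coeff (P b) i" using \<sigma>(1) P(2) by (auto simp: gal_def)
      then have "poly (P b) (\<sigma> b) = \<sigma> (poly (P b) b)" by (simp add: field_aut_poly)
      then show ?thesis using P(3) \<open>field_aut \<sigma>\<close> by (simp add: R_def field_aut_hom_simps(1))
    qed
    then show "g \<in> Pi\<^sub>E B R" using \<sigma>(2) by simp
  qed
  moreover have "inj_on (\<lambda>\<sigma>. restrict \<sigma> B) (gal F)"
  proof (rule inj_onI, rule ext)
    fix \<sigma> \<tau> y assume s: "\<sigma> \<in> gal F" and t: "\<tau> \<in> gal F" and eq: "restrict \<sigma> B = restrict \<tau> B"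
    obtain c where c: "\<forall>b\<in>B. c b \<in> F" "y = (\<Sum>b\<in>B. c b * b)" using span by blast
    have "\<sigma> y = (\<Sum>b\<in>B. c b * \<sigma> b)" using c s by (simp add: gal_def field_aut_hom_simps)
    also have "\<dots> = (\<Sum>b\<in>B. c b * \<tau> b)"
      using eq by (intro sum.cong refl) (metis restrict_apply')
    also have "\<dots> = \<tau> y" using c t by (simp add: gal_def field_aut_hom_simps)
    finally show "\<sigma> y = \<tau> y" .
  qed
  ultimately show ?thesis by (meson inj_on_finite)
qed

section \<open>Ideals of a subring\<close>

lemma ideal_in_0: "ideal_in S M \<Longrightarrow> 0 \<in> M"
  and ideal_in_subset: "ideal_in S M \<Longrightarrow> M \<subseteq> S"
  and ideal_in_add: "ideal_in S M \<Longrightarrow> x \<in> M \<Longrightarrow> y \<in> M \<Longrightarrow> x + y \<in> M"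
  and ideal_in_mult: "ideal_in S M \<Longrightarrow> s \<in> S \<Longrightarrow> x \<in> M \<Longrightarrow> s * x \<in> M"
  by (auto simp: ideal_in_def)

lemma ideal_in_diff:
  assumes S: "subring S" and M: "ideal_in S M" and "x \<in> M" "y \<in> M"
  shows "x - y \<in> M"
proof -
  have "(- 1) * y \<in> M" using assms by (intro ideal_in_mult[OF M] subring_uminus[OF S]) auto
  then show ?thesis using ideal_in_add[OF M \<open>x \<in> M\<close>, of "- y"] by simp
qed

lemma ideal_in_sum: "ideal_in S M \<Longrightarrow> (\<And>x. x \<in> A \<Longrightarrow> g x \<in> M) \<Longrightarrow> sum g A \<in> M"
  by (induction A rule: infinite_finite_induct) (auto intro: ideal_in_0 ideal_in_add)

lemma ideal_in_proper_iff:
  assumes S: "subring S" and M: "ideal_in S M"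
  shows "M \<noteq> S \<longleftrightarrow> 1 \<notin> M"
  using ideal_in_subset[OF M] ideal_in_mult[OF M, of _ 1] S by fastforce

lemma ideal_in_Union_chain:
  assumes "C \<noteq> {}" "\<forall>J\<in>C. ideal_in S J" "\<forall>X\<in>C. \<forall>Y\<in>C. X \<subseteq> Y \<or> Y \<subseteq> X"
  shows "ideal_in S (\<Union>C)"
  unfolding ideal_in_def
proof (intro conjI ballI)
  show "\<Union>C \<subseteq> S" "0 \<in> \<Union>C" using assms by (auto simp: ideal_in_def)
  fix x y assume "x \<in> \<Union>C" "y \<in> \<Union>C"
  then obtain X Y where "X \<in> C" "Y \<in> C" "x \<in> X" "y \<in> Y" by blast
  then show "x + y \<in> \<Union>C" using assms(2,3) by (metis UnionI ideal_in_add subsetD)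
next
  fix s x assume "s \<in> S" "x \<in> \<Union>C"
  then show "s * x \<in> \<Union>C" using assms(2) ideal_in_mult by blast
qed

lemma maximal_ideal_exists:
  assumes S: "subring S" and I: "ideal_in S I" and "1 \<notin> I"
  obtains M where "maximal_ideal_in S M" "I \<subseteq> M"
proof -
  define A where "A = {J. ideal_in S J \<and> I \<subseteq> J \<and> 1 \<notin> J}"
  have "\<exists>M\<in>A. \<forall>X\<in>A. M \<subseteq> X \<longrightarrow> X = M"
  proof (rule subset_Zorn_nonempty)
    show "A \<noteq> {}" using assms by (auto simp: A_def)
    fix C assume C: "C \<noteq> {}" "subset.chain A C"
    then have "ideal_in S (\<Union>C)"
      by (intro ideal_in_Union_chain) (auto simp: A_def subset.chain_def)
    then show "\<Union>C \<in> A" using C by (auto simp: A_def subset.chain_def)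
  qed
  then obtain M where M: "M \<in> A" and max: "\<forall>X\<in>A. M \<subseteq> X \<longrightarrow> X = M" by blast
  have "maximal_ideal_in S M"
    using M max ideal_in_proper_iff[OF S] by (auto simp: maximal_ideal_in_def A_def)
  with M show ?thesis using that by (auto simp: A_def)
qed

text \<open>The ideal M + S a is strictly larger than M, hence all of S; writing 1 = m + s a
  and multiplying by b puts b in M.\<close>
lemma maximal_ideal_prime:
  assumes S: "subring S" and M: "maximal_ideal_in S M" and a: "a \<in> S" and b: "b \<in> S"
    and ab: "a * b \<in> M" and na: "a \<notin> M"
  shows "b \<in> M"
proof -
  have MI: "ideal_in S M" using M by (simp add: maximal_ideal_in_def)
  define J where "J = {m + s * a | m s. m \<in> M \<and> s \<in> S}"
  have J: "ideal_in S J" unfolding ideal_in_def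
  proof (intro conjI ballI)
    show "J \<subseteq> S" using ideal_in_subset[OF MI] S a by (force simp: J_def intro: subring_add subring_mult)
    show "0 \<in> J" unfolding J_def using ideal_in_0[OF MI] S by force
    fix x y assume "x \<in> J" "y \<in> J"
    then obtain m1 s1 m2 s2 where "x = m1 + s1 * a" "y = m2 + s2 * a" "m1 \<in> M" "m2 \<in> M" "s1 \<in> S" "s2 \<in> S"
      by (auto simp: J_def)
    then have "x + y = (m1 + m2) + (s1 + s2) * a" "m1 + m2 \<in> M" "s1 + s2 \<in> S"
      using MI S by (auto simp: algebra_simps ideal_in_add subring_add)
    then show "x + y \<in> J" unfolding J_def by blast
  next
    fix t x assume t: "t \<in> S" and "x \<in> J"
    then obtain m s where "x = m + s * a" "m \<in> M" "s \<in> S" by (auto simp: J_def)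
    moreover have "t * m \<in> M" "t * s \<in> S"
      using MI S t \<open>m \<in> M\<close> \<open>s \<in> S\<close> by (auto simp: ideal_in_mult subring_mult)
    ultimately have "t * x = t * m + (t * s) * a" "t * m \<in> M" "t * s \<in> S"
      by (simp_all add: algebra_simps)
    then show "t * x \<in> J" unfolding J_def by blast
  qed
  have "m \<in> J" if "m \<in> M" for m using that S unfolding J_def by force
  moreover have "a \<in> J" using ideal_in_0[OF MI] S unfolding J_def by force
  ultimately have "J = S" using M J na by (auto simp: maximal_ideal_in_def)
  then have "1 \<in> J" using S by simp
  then obtain m s where ms: "1 = m + s * a" "m \<in> M" "s \<in> S" by (auto simp: J_def)
  have "b = b * m + s * (a * b)" using ms(1) by (metis mult.assoc mult.commute mult_1 distrib_left)
  also have "\<dots> \<in> M"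
    using ideal_in_mult[OF MI b ms(2)] ideal_in_mult[OF MI ms(3) ab] by (rule ideal_in_add[OF MI])
  finally show ?thesis .
qed

lemma ideal_in_image:
  assumes \<sigma>: "field_aut \<sigma>" and S: "\<sigma> ` S = S" and M: "ideal_in S M"
  shows "ideal_in S (\<sigma> ` M)"
  unfolding ideal_in_def
proof (intro conjI ballI)
  show "\<sigma> ` M \<subseteq> S" "0 \<in> \<sigma> ` M"
    using ideal_in_subset[OF M] ideal_in_0[OF M] S field_aut_hom_simps(1)[OF \<sigma>] by force+
  fix x y assume "x \<in> \<sigma> ` M" "y \<in> \<sigma> ` M"
  then show "x + y \<in> \<sigma> ` M" using ideal_in_add[OF M] by (force simp: field_aut_hom_simps(3)[OF \<sigma>, symmetric])
next
  fix s x assume s: "s \<in> S" and "x \<in> \<sigma> ` M"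
  then obtain m t where "m \<in> M" "x = \<sigma> m" "t \<in> S" "s = \<sigma> t" using S by blast
  then show "s * x \<in> \<sigma> ` M" using ideal_in_mult[OF M] by (force simp: field_aut_hom_simps(5)[OF \<sigma>, symmetric])
qed

lemma maximal_ideal_image:
  assumes S: "subring S" and \<sigma>: "field_aut \<sigma>" and S\<sigma>: "\<sigma> ` S = S" and M: "maximal_ideal_in S M"
  shows "maximal_ideal_in S (\<sigma> ` M)"
proof -
  have MI: "ideal_in S M" and M1: "1 \<notin> M"
    using M ideal_in_proper_iff[OF S] by (auto simp: maximal_ideal_in_def)
  have \<sigma>': "field_aut (inv \<sigma>)" using field_aut_inv[OF \<sigma>] .
  have inv_image: "inv \<sigma> ` \<sigma> ` X = X" for X using field_aut_inv_cancel(1)[OF \<sigma>] by (simp add: image_comp)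
  then have S\<sigma>': "inv \<sigma> ` S = S" using S\<sigma> by metis
  have one: "\<sigma> x = 1 \<longleftrightarrow> x = 1" "inv \<sigma> x = 1 \<longleftrightarrow> x = 1" for x
    using field_aut_inv_cancel[OF \<sigma>] \<sigma> by (metis field_aut_def)+
  have "ideal_in S (\<sigma> ` M)" "1 \<notin> \<sigma> ` M" using ideal_in_image[OF \<sigma> S\<sigma> MI] M1 one by auto
  moreover have "J = \<sigma> ` M" if J: "ideal_in S J" "\<sigma> ` M \<subseteq> J" "1 \<notin> J" for J
  proof -
    have "ideal_in S (inv \<sigma> ` J)" "M \<subseteq> inv \<sigma> ` J" "1 \<notin> inv \<sigma> ` J"
      using ideal_in_image[OF \<sigma>' S\<sigma>' J(1)] image_mono[OF J(2), of "inv \<sigma>"] J(3) one inv_image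
      by auto
    then have "inv \<sigma> ` J = M" using M ideal_in_proper_iff[OF S] by (auto simp: maximal_ideal_in_def)
    then show ?thesis using field_aut_inv_cancel(2)[OF \<sigma>] by (auto simp: image_comp)
  qed
  ultimately show ?thesis using ideal_in_proper_iff[OF S] by (auto simp: maximal_ideal_in_def)
qed

lemma mem_Inter_maximal_avoiding_iff:
  assumes S: "subring S" and s: "s \<in> S" and c: "c \<in> S"
  shows "s \<in> \<Inter>{N. maximal_ideal_in S N \<and> c \<notin> N} \<longleftrightarrow> (\<forall>N. maximal_ideal_in S N \<longrightarrow> s * c \<in> N)"
proof safe
  fix N assume N: "maximal_ideal_in S N" and "s \<in> \<Inter>{N. maximal_ideal_in S N \<and> c \<notin> N}"
  then have "s \<in> N \<or> c \<in> N" by blast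
  moreover have "ideal_in S N" using N by (simp add: maximal_ideal_in_def)
  ultimately show "s * c \<in> N" using ideal_in_mult s c by (metis mult.commute)
next
  fix N assume "\<forall>N. maximal_ideal_in S N \<longrightarrow> s * c \<in> N" "maximal_ideal_in S N" "c \<notin> N"
  then show "s \<in> N" using maximal_ideal_prime[OF S _ c s] by (simp add: mult.commute)
qed

section \<open>Graded left ideals of the crossed product\<close>

locale crossed_product =
  fixes G :: "('k::field \<Rightarrow> 'k) set" and S :: "'k set"
    and f :: "('k \<Rightarrow> 'k) \<Rightarrow> ('k \<Rightarrow> 'k) \<Rightarrow> 'k"
  assumes subring_S: "subring S" and finite_G: "finite G" and id_in_G: "id \<in> G"
    and inv_in_G: "\<sigma> \<in> G \<Longrightarrow> inv \<sigma> \<in> G"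
    and comp_in_G: "\<sigma> \<in> G \<Longrightarrow> \<tau> \<in> G \<Longrightarrow> \<sigma> \<circ> \<tau> \<in> G"
    and field_aut_G: "\<sigma> \<in> G \<Longrightarrow> field_aut \<sigma>"
    and G_preserves_S: "\<sigma> \<in> G \<Longrightarrow> x \<in> S \<Longrightarrow> \<sigma> x \<in> S"
    and cocycle: "normalized_cocycle G S f"
begin

abbreviation Af :: "(('k \<Rightarrow> 'k) \<Rightarrow> 'k) set" where "Af \<equiv> cp_carrier G S"

lemmas G_hom_simps = field_aut_hom_simps[OF field_aut_G]
lemmas G_inv_cancel = field_aut_inv_cancel[OF field_aut_G]

lemma f_in_S: "\<sigma> \<in> G \<Longrightarrow> \<tau> \<in> G \<Longrightarrow> f \<sigma> \<tau> \<in> S"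
  and f_cocycle: "\<sigma> \<in> G \<Longrightarrow> \<tau> \<in> G \<Longrightarrow> \<gamma> \<in> G \<Longrightarrow>
    \<sigma> (f \<tau> \<gamma>) * f \<sigma> (\<tau> \<circ> \<gamma>) = f \<sigma> \<tau> * f (\<sigma> \<circ> \<tau>) \<gamma>"
  and f_id_left: "\<sigma> \<in> G \<Longrightarrow> f id \<sigma> = 1"
  and f_id_right: "\<sigma> \<in> G \<Longrightarrow> f \<sigma> id = 1"
  using cocycle by (auto simp: normalized_cocycle_def)

lemma image_S:
  assumes "\<sigma> \<in> G" shows "\<sigma> ` S = S"
proof
  show "\<sigma> ` S \<subseteq> S" using G_preserves_S[OF assms] by blast
  show "S \<subseteq> \<sigma> ` S"
  proof
    fix x assume "x \<in> S"
    then have "inv \<sigma> x \<in> S" by (rule G_preserves_S[OF inv_in_G[OF assms]])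
    then show "x \<in> \<sigma> ` S" using G_inv_cancel(2)[OF assms, of x] by (metis image_eqI)
  qed
qed

lemma inv_comp_eq_iff:
  assumes "\<rho> \<in> G" shows "inv \<rho> \<circ> \<tau> = \<gamma> \<longleftrightarrow> \<tau> = \<rho> \<circ> \<gamma>"
proof
  assume "inv \<rho> \<circ> \<tau> = \<gamma>"
  then have "\<rho> \<circ> (inv \<rho> \<circ> \<tau>) = \<rho> \<circ> \<gamma>" by simp
  then show "\<tau> = \<rho> \<circ> \<gamma>" using G_inv_cancel(2)[OF assms] by (simp add: fun_eq_iff)
qed (simp add: fun_eq_iff G_inv_cancel(1)[OF assms])

lemma f_inv:
  assumes "\<rho> \<in> G" shows "\<rho> (f (inv \<rho>) \<rho>) = f \<rho> (inv \<rho>)"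
proof -
  have "inv \<rho> \<circ> \<rho> = id" "\<rho> \<circ> inv \<rho> = id" using G_inv_cancel[OF assms] by (simp_all add: fun_eq_iff)
  then show ?thesis
    using f_cocycle[OF assms inv_in_G[OF assms] assms] f_id_left[OF assms] f_id_right[OF assms] by simp
qed

text \<open>cp_single \<sigma> s is the element s x_\<sigma>.\<close>
definition cp_single :: "('k \<Rightarrow> 'k) \<Rightarrow> 'k \<Rightarrow> ('k \<Rightarrow> 'k) \<Rightarrow> 'k" where
  "cp_single \<sigma> s = (\<lambda>\<tau>. if \<tau> = \<sigma> then s else 0)"

lemma cp_single_in_Af: "\<sigma> \<in> G \<Longrightarrow> s \<in> S \<Longrightarrow> cp_single \<sigma> s \<in> Af"
  by (auto simp: cp_carrier_def cp_single_def subring_0[OF subring_S])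

lemma hcomp_eq_cp_single: "hcomp a \<sigma> = cp_single \<sigma> (a \<sigma>)"
  by (simp add: hcomp_def cp_single_def)

lemma cp_mult_in_Af:
  assumes "c \<in> Af" "a \<in> Af" shows "cp_mult G f c a \<in> Af"
proof -
  have "c \<sigma> * \<sigma> (a \<tau>) * f \<sigma> \<tau> \<in> S" if "\<sigma> \<in> G" "\<tau> \<in> G" for \<sigma> \<tau>
    using that assms subring_mult[OF subring_S] G_preserves_S f_in_S by (simp add: cp_carrier_def)
  then show ?thesis
    using comp_in_G subring_0[OF subring_S] unfolding cp_carrier_def cp_mult_def
    by (auto intro!: subring_sum[OF subring_S] sum.neutral)
qed

lemma cp_mult_single_left:
  assumes "\<sigma> \<in> G"
  shows "cp_mult G f (cp_single \<sigma> t) a \<rho> = (\<Sum>\<tau>\<in>G. if \<sigma> \<circ> \<tau> = \<rho> then t * \<sigma> (a \<tau>) * f \<sigma> \<tau> else 0)"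
proof -
  have "cp_mult G f (cp_single \<sigma> t) a \<rho> =
      (\<Sum>\<sigma>'\<in>G. if \<sigma>' = \<sigma> then (\<Sum>\<tau>\<in>G. if \<sigma> \<circ> \<tau> = \<rho> then t * \<sigma> (a \<tau>) * f \<sigma> \<tau> else 0) else 0)"
    unfolding cp_mult_def cp_single_def by (intro sum.cong refl) (auto intro: sum.neutral)
  then show ?thesis using assms finite_G by simp
qed

lemma cp_mult_single_id: "cp_mult G f (cp_single id t) (cp_single id s) = cp_single id (t * s)"
proof
  fix \<rho>
  have "cp_mult G f (cp_single id t) (cp_single id s) \<rho> =
      (\<Sum>\<tau>\<in>G. if id \<circ> \<tau> = \<rho> then t * id (cp_single id s \<tau>) * f id \<tau> else 0)"
    by (rule cp_mult_single_left[OF id_in_G])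
  also have "\<dots> = (\<Sum>\<tau>\<in>G. if \<tau> = \<rho> then t * cp_single id s \<tau> else 0)"
    by (intro sum.cong refl) (auto simp: f_id_left)
  finally show "cp_mult G f (cp_single id t) (cp_single id s) \<rho> = cp_single id (t * s) \<rho>"
    using id_in_G finite_G by (simp add: cp_single_def)
qed

lemma cp_mult_single_id_right:
  assumes "c \<in> Af" shows "cp_mult G f c (cp_single id 1) = c"
proof
  fix \<rho>
  have "cp_mult G f c (cp_single id 1) \<rho> =
      (\<Sum>\<sigma>\<in>G. \<Sum>\<tau>\<in>G. if \<tau> = id then (if \<sigma> = \<rho> then c \<sigma> else 0) else 0)"
    unfolding cp_mult_def cp_single_def by (intro sum.cong refl) (auto simp: G_hom_simps f_id_right)
  also have "\<dots> = (\<Sum>\<sigma>\<in>G. if \<sigma> = \<rho> then c \<sigma> else 0)" using id_in_G finite_G by simp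
  also have "\<dots> = c \<rho>" using assms finite_G by (auto simp: cp_carrier_def)
  finally show "cp_mult G f c (cp_single id 1) \<rho> = c \<rho>" .
qed

text \<open>inv_coeff \<rho> s is the coefficient of x_id in x_{\<rho>^-1} (s x_\<rho>).\<close>
definition inv_coeff :: "('k \<Rightarrow> 'k) \<Rightarrow> 'k \<Rightarrow> 'k" where
  "inv_coeff \<rho> s = inv \<rho> s * f (inv \<rho>) \<rho>"

lemma cp_mult_single_inv_at_id:
  assumes "\<rho> \<in> G" shows "cp_mult G f (cp_single (inv \<rho>) 1) a id = inv_coeff \<rho> (a \<rho>)"
proof -
  have "cp_mult G f (cp_single (inv \<rho>) 1) a id =
      (\<Sum>\<tau>\<in>G. if inv \<rho> \<circ> \<tau> = id then 1 * inv \<rho> (a \<tau>) * f (inv \<rho>) \<tau> else 0)"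
    by (rule cp_mult_single_left[OF inv_in_G[OF assms]])
  also have "\<dots> = (\<Sum>\<tau>\<in>G. if \<tau> = \<rho> then inv_coeff \<rho> (a \<tau>) else 0)"
    by (intro sum.cong refl) (auto simp: inv_comp_eq_iff[OF assms] inv_coeff_def)
  also have "\<dots> = inv_coeff \<rho> (a \<rho>)" using assms finite_G by simp
  finally show ?thesis .
qed

lemma inv_coeff_id: "inv_coeff id s = s"
  by (simp add: inv_coeff_def inv_id f_id_left id_in_G)

lemma inv_coeff_0: "\<rho> \<in> G \<Longrightarrow> inv_coeff \<rho> 0 = 0"
  and inv_coeff_add: "\<rho> \<in> G \<Longrightarrow> inv_coeff \<rho> (s + t) = inv_coeff \<rho> s + inv_coeff \<rho> t"
  and inv_coeff_diff: "\<rho> \<in> G \<Longrightarrow> inv_coeff \<rho> (s - t) = inv_coeff \<rho> s - inv_coeff \<rho> t"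
  and inv_coeff_sum: "\<rho> \<in> G \<Longrightarrow> inv_coeff \<rho> (sum g A) = (\<Sum>a\<in>A. inv_coeff \<rho> (g a))"
  by (simp_all add: inv_coeff_def G_hom_simps[OF inv_in_G] distrib_right left_diff_distrib sum_distrib_right)

text \<open>The cocycle identity at (\<rho>^-1, \<sigma>, \<tau>) with \<sigma> \<tau> = \<rho>.\<close>
lemma inv_coeff_twisted_product:
  assumes \<sigma>: "\<sigma> \<in> G" and \<tau>: "\<tau> \<in> G" and \<rho>: "\<sigma> \<circ> \<tau> = \<rho>"
  shows "inv_coeff \<rho> (c * \<sigma> b * f \<sigma> \<tau>) = (inv \<rho> c * f (inv \<rho>) \<sigma>) * inv_coeff \<tau> b"
proof -
  have \<rho>G: "\<rho> \<in> G" using comp_in_G[OF \<sigma> \<tau>] \<rho> by simp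
  have "\<sigma> = \<rho> \<circ> inv \<tau>" unfolding \<rho>[symmetric] using G_inv_cancel(2)[OF \<tau>] by (simp add: fun_eq_iff)
  then have "inv \<rho> \<circ> \<sigma> = inv \<tau>" using inv_comp_eq_iff[OF \<rho>G, of \<sigma> "inv \<tau>"] by blast
  then have inv_\<sigma>: "inv \<rho> (\<sigma> b) = inv \<tau> b" by (metis comp_apply)
  have "inv \<rho> (f \<sigma> \<tau>) * f (inv \<rho>) \<rho> = f (inv \<rho>) \<sigma> * f (inv \<tau>) \<tau>"
    using f_cocycle[OF inv_in_G[OF \<rho>G] \<sigma> \<tau>] \<rho> \<open>inv \<rho> \<circ> \<sigma> = inv \<tau>\<close> by simp
  then show ?thesis
    by (simp add: inv_coeff_def G_hom_simps[OF inv_in_G[OF \<rho>G]] inv_\<sigma> ac_simps)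
qed

lemma inv_coeff_cp_mult:
  assumes "\<rho> \<in> G"
  shows "inv_coeff \<rho> (cp_mult G f c a \<rho>) =
    (\<Sum>\<sigma>\<in>G. \<Sum>\<tau>\<in>G. if \<sigma> \<circ> \<tau> = \<rho> then (inv \<rho> (c \<sigma>) * f (inv \<rho>) \<sigma>) * inv_coeff \<tau> (a \<tau>) else 0)"
  unfolding cp_mult_def inv_coeff_sum[OF assms]
  by (intro sum.cong refl) (simp add: inv_coeff_twisted_product inv_coeff_0[OF assms])

lemma inv_coeff_mem_image_iff:
  assumes "\<rho> \<in> G" shows "inv_coeff \<rho> s \<in> M \<longleftrightarrow> s * f \<rho> (inv \<rho>) \<in> \<rho> ` M"
proof -
  have "inj \<rho>" using field_aut_G[OF assms] by (simp add: field_aut_def bij_is_inj)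
  moreover have "\<rho> (inv_coeff \<rho> s) = s * f \<rho> (inv \<rho>)"
    by (simp add: inv_coeff_def G_hom_simps[OF assms] G_inv_cancel[OF assms] f_inv[OF assms])
  ultimately show ?thesis by (metis inj_image_mem_iff)
qed

definition base_ideal :: "(('k \<Rightarrow> 'k) \<Rightarrow> 'k) set \<Rightarrow> 'k set" where
  "base_ideal L = {s \<in> S. cp_single id s \<in> L}"

definition lift_ideal :: "'k set \<Rightarrow> (('k \<Rightarrow> 'k) \<Rightarrow> 'k) set" where
  "lift_ideal M = {a \<in> Af. \<forall>\<rho>\<in>G. inv_coeff \<rho> (a \<rho>) \<in> M}"

lemma ideal_base_ideal:
  assumes L: "graded_left_ideal G S f L" shows "ideal_in S (base_ideal L)"
  unfolding ideal_in_def
proof (intro conjI ballI)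
  show "base_ideal L \<subseteq> S" by (auto simp: base_ideal_def)
  have "cp_single id 0 = (\<lambda>_. 0)" by (simp add: cp_single_def fun_eq_iff)
  then show "0 \<in> base_ideal L" using L subring_S by (simp add: base_ideal_def graded_left_ideal_def)
  fix s t assume "s \<in> base_ideal L" "t \<in> base_ideal L"
  then have "cp_add (cp_single id s) (cp_single id t) \<in> L" "s + t \<in> S"
    using L subring_S by (auto simp: base_ideal_def graded_left_ideal_def subring_add)
  moreover have "cp_add (cp_single id s) (cp_single id t) = cp_single id (s + t)"
    by (simp add: cp_single_def cp_add_def fun_eq_iff)
  ultimately show "s + t \<in> base_ideal L" by (simp add: base_ideal_def)
next
  fix s t assume "s \<in> S" "t \<in> base_ideal L"
  then have "cp_mult G f (cp_single id s) (cp_single id t) \<in> L" "s * t \<in> S"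
    using L cp_single_in_Af[OF id_in_G] subring_S
    by (auto simp: base_ideal_def graded_left_ideal_def subring_mult)
  then show "s * t \<in> base_ideal L" by (simp add: base_ideal_def cp_mult_single_id)
qed

lemma one_notin_base_ideal:
  assumes L: "graded_left_ideal G S f L" and "L \<noteq> Af" shows "1 \<notin> base_ideal L"
proof
  assume "1 \<in> base_ideal L"
  then have "cp_mult G f c (cp_single id 1) \<in> L" if "c \<in> Af" for c
    using L that by (simp add: base_ideal_def graded_left_ideal_def)
  then have "Af \<subseteq> L" using cp_mult_single_id_right by auto
  with assms show False by (auto simp: graded_left_ideal_def)
qed

lemma base_lift_ideal:
  assumes M: "ideal_in S M" shows "base_ideal (lift_ideal M) = M"
proof -
  have "inv_coeff \<rho> (cp_single id s \<rho>) \<in> M \<longleftrightarrow> (\<rho> = id \<longrightarrow> s \<in> M)" if "\<rho> \<in> G" for \<rho> s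
    using that ideal_in_0[OF M] by (auto simp: cp_single_def inv_coeff_id inv_coeff_0)
  then show ?thesis
    using ideal_in_subset[OF M] cp_single_in_Af[OF id_in_G] id_in_G
    by (auto simp: base_ideal_def lift_ideal_def)
qed

lemma lift_ideal_ne_Af:
  assumes "ideal_in S M" "1 \<notin> M" shows "lift_ideal M \<noteq> Af"
  using assms base_lift_ideal[OF assms(1)] cp_single_in_Af[OF id_in_G] subring_1[OF subring_S]
  by (auto simp: base_ideal_def lift_ideal_def)

lemma lift_ideal_mult_closed:
  assumes M: "ideal_in S M" and c: "c \<in> Af" and a: "a \<in> lift_ideal M"
  shows "cp_mult G f c a \<in> lift_ideal M"
proof -
  have "inv_coeff \<rho> (cp_mult G f c a \<rho>) \<in> M" if \<rho>: "\<rho> \<in> G" for \<rho>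
    unfolding inv_coeff_cp_mult[OF \<rho>]
  proof (intro ideal_in_sum[OF M])
    fix \<sigma> \<tau> assume "\<sigma> \<in> G" "\<tau> \<in> G"
    moreover have "inv \<rho> (c \<sigma>) * f (inv \<rho>) \<sigma> \<in> S" if "\<sigma> \<in> G"
      using that c \<rho> by (simp add: cp_carrier_def G_preserves_S inv_in_G f_in_S subring_mult[OF subring_S])
    ultimately show "(if \<sigma> \<circ> \<tau> = \<rho> then inv \<rho> (c \<sigma>) * f (inv \<rho>) \<sigma> * inv_coeff \<tau> (a \<tau>) else 0) \<in> M"
      using a ideal_in_0[OF M] ideal_in_mult[OF M] by (auto simp: lift_ideal_def)
  qed
  then show ?thesis using cp_mult_in_Af c a by (simp add: lift_ideal_def)
qed

lemma graded_lift_ideal: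
  assumes M: "ideal_in S M" shows "graded_left_ideal G S f (lift_ideal M)"
  unfolding graded_left_ideal_def
proof (intro conjI ballI)
  show "lift_ideal M \<subseteq> Af" by (auto simp: lift_ideal_def)
  show "(\<lambda>_. 0) \<in> lift_ideal M"
    using ideal_in_0[OF M] subring_0[OF subring_S] by (simp add: lift_ideal_def cp_carrier_def inv_coeff_0)
  fix a b assume "a \<in> lift_ideal M" "b \<in> lift_ideal M"
  then show "cp_add a b \<in> lift_ideal M" "(\<lambda>\<rho>. a \<rho> - b \<rho>) \<in> lift_ideal M"
    using ideal_in_add[OF M] ideal_in_diff[OF subring_S M] subring_add[OF subring_S] subring_diff[OF subring_S]
    by (auto simp: lift_ideal_def cp_carrier_def cp_add_def inv_coeff_add inv_coeff_diff)
next
  fix c a assume "c \<in> Af" "a \<in> lift_ideal M"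
  then show "cp_mult G f c a \<in> lift_ideal M" by (rule lift_ideal_mult_closed[OF M])
next
  fix a \<sigma> assume "a \<in> lift_ideal M" "\<sigma> \<in> G"
  then show "hcomp a \<sigma> \<in> lift_ideal M"
    using ideal_in_0[OF M] cp_single_in_Af[of \<sigma> "a \<sigma>"]
    by (auto simp: lift_ideal_def hcomp_eq_cp_single cp_carrier_def cp_single_def inv_coeff_0)
qed

text \<open>Multiplying a \<in> L by x_{\<rho>^-1} and taking the component of degree id moves the
  \<rho>-coefficient of a into base_ideal L.\<close>
lemma subset_lift_base_ideal:
  assumes L: "graded_left_ideal G S f L" and sub: "base_ideal L \<subseteq> M"
  shows "L \<subseteq> lift_ideal M"
proof
  fix a assume a: "a \<in> L"
  have "inv_coeff \<rho> (a \<rho>) \<in> M" if \<rho>: "\<rho> \<in> G" for \<rho>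
  proof -
    define b where "b = cp_mult G f (cp_single (inv \<rho>) 1) a"
    have "b \<in> L"
      using L a cp_single_in_Af[OF inv_in_G[OF \<rho>] subring_1[OF subring_S]]
      by (simp add: b_def graded_left_ideal_def)
    then have "cp_single id (b id) \<in> L" "b id \<in> S"
      using L id_in_G by (auto simp: graded_left_ideal_def cp_carrier_def hcomp_eq_cp_single[symmetric])
    then show ?thesis
      using sub cp_mult_single_inv_at_id[OF \<rho>] by (auto simp: base_ideal_def b_def)
  qed
  then show "a \<in> lift_ideal M" using L a by (auto simp: lift_ideal_def graded_left_ideal_def)
qed

lemma maximal_graded_lift_ideal:
  assumes M: "maximal_ideal_in S M" shows "maximal_graded_left_ideal G S f (lift_ideal M)"
proof -
  have MI: "ideal_in S M" and M1: "1 \<notin> M"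
    using M ideal_in_proper_iff[OF subring_S] by (auto simp: maximal_ideal_in_def)
  have "L = lift_ideal M" if L: "graded_left_ideal G S f L" "lift_ideal M \<subseteq> L" "L \<noteq> Af" for L
  proof -
    have "M \<subseteq> base_ideal L" using L(2) base_lift_ideal[OF MI] by (auto simp: base_ideal_def)
    then have "base_ideal L = M"
      using M ideal_base_ideal[OF L(1)] one_notin_base_ideal[OF L(1,3)] ideal_in_proper_iff[OF subring_S]
      by (auto simp: maximal_ideal_in_def)
    then show ?thesis using subset_lift_base_ideal[OF L(1)] L(2) by blast
  qed
  then show ?thesis
    using graded_lift_ideal[OF MI] lift_ideal_ne_Af[OF MI M1] by (auto simp: maximal_graded_left_ideal_def)
qed

lemma maximal_graded_left_ideal_eq_lift:
  assumes L: "maximal_graded_left_ideal G S f L"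
  obtains M where "maximal_ideal_in S M" "L = lift_ideal M"
proof -
  have LG: "graded_left_ideal G S f L" and LA: "L \<noteq> Af"
    using L by (auto simp: maximal_graded_left_ideal_def)
  obtain M where M: "maximal_ideal_in S M" "base_ideal L \<subseteq> M"
    using maximal_ideal_exists[OF subring_S ideal_base_ideal[OF LG] one_notin_base_ideal[OF LG LA]] .
  then have "ideal_in S M" "1 \<notin> M" using ideal_in_proper_iff[OF subring_S] by (auto simp: maximal_ideal_in_def)
  then have "lift_ideal M = L"
    using L subset_lift_base_ideal[OF LG M(2)] graded_lift_ideal lift_ideal_ne_Af
    by (auto simp: maximal_graded_left_ideal_def)
  with M show thesis using that by blast
qed

lemma graded_jacobson_eq_Inter_lift:
  "graded_jacobson G S f = Af \<inter> \<Inter>{lift_ideal M | M. maximal_ideal_in S M}"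
proof -
  have "{L. maximal_graded_left_ideal G S f L} = {lift_ideal M | M. maximal_ideal_in S M}"
    using maximal_graded_lift_ideal maximal_graded_left_ideal_eq_lift by blast
  then show ?thesis by (simp add: graded_jacobson_def)
qed

lemma all_maximal_image_iff:
  assumes \<rho>: "\<rho> \<in> G"
  shows "(\<forall>M. maximal_ideal_in S M \<longrightarrow> P (\<rho> ` M)) \<longleftrightarrow> (\<forall>N. maximal_ideal_in S N \<longrightarrow> P N)"
proof -
  have max: "maximal_ideal_in S (\<sigma> ` M)" if "\<sigma> \<in> G" "maximal_ideal_in S M" for \<sigma> M
    using maximal_ideal_image[OF subring_S field_aut_G image_S] that by blast
  have "N = \<rho> ` inv \<rho> ` N" for N using G_inv_cancel(2)[OF \<rho>] by (simp add: image_comp)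
  then show ?thesis using max[OF \<rho>] max[OF inv_in_G[OF \<rho>]] by metis
qed

lemma mem_all_lift_ideals_iff:
  assumes a: "a \<in> Af"
  shows "(\<forall>M. maximal_ideal_in S M \<longrightarrow> a \<in> lift_ideal M) \<longleftrightarrow> (\<forall>\<sigma>\<in>G. a \<sigma> \<in> I_sig S f \<sigma>)"
proof -
  have "(\<forall>M. maximal_ideal_in S M \<longrightarrow> a \<in> lift_ideal M) \<longleftrightarrow>
      (\<forall>\<rho>\<in>G. \<forall>M. maximal_ideal_in S M \<longrightarrow> a \<rho> * f \<rho> (inv \<rho>) \<in> \<rho> ` M)"
    using a inv_coeff_mem_image_iff by (auto simp: lift_ideal_def)
  also have "\<dots> \<longleftrightarrow> (\<forall>\<rho>\<in>G. \<forall>N. maximal_ideal_in S N \<longrightarrow> a \<rho> * f \<rho> (inv \<rho>) \<in> N)"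
    using all_maximal_image_iff by blast
  also have "\<dots> \<longleftrightarrow> (\<forall>\<rho>\<in>G. a \<rho> \<in> I_sig S f \<rho>)"
    using mem_Inter_maximal_avoiding_iff[OF subring_S] a f_in_S inv_in_G
    by (auto simp: I_sig_def cp_carrier_def)
  finally show ?thesis .
qed

theorem graded_jacobson_eq:
  "graded_jacobson G S f = {a \<in> Af. \<forall>\<sigma>\<in>G. a \<sigma> \<in> I_sig S f \<sigma>}"
  unfolding graded_jacobson_eq_Inter_lift using mem_all_lift_ideals_iff by blast

end

theorem proposition2p4:
  fixes V F :: "'k::field set"
    and f :: "('k \<Rightarrow> 'k) \<Rightarrow> ('k \<Rightarrow> 'k) \<Rightarrow> 'k"
  assumes "valuation_domain_with_qf V F"
    and "finite_galois F"
    and "normalized_cocycle (gal F) (integral_closure V) f"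
  shows "graded_jacobson (gal F) (integral_closure V) f =
         {a \<in> cp_carrier (gal F) (integral_closure V).
            \<forall>\<sigma>\<in>gal F. a \<sigma> \<in> I_sig (integral_closure V) f \<sigma>}"
proof -
  have V: "subring V" "V \<subseteq> F" using assms(1) by (auto simp: valuation_domain_with_qf_def)
  have F: "subfield F" "finite_ext F" using assms(2) by (auto simp: finite_galois_def)
  interpret crossed_product "gal F" "integral_closure V" f
  proof
    show "subring (integral_closure V)" by (rule subring_integral_closure[OF V(1)])
    show "finite (gal F)" by (rule finite_gal[OF F])
    show "\<sigma> \<in> gal F \<Longrightarrow> field_aut \<sigma>" for \<sigma> by (simp add: gal_def)
    show "\<sigma> \<in> gal F \<Longrightarrow> x \<in> integral_closure V \<Longrightarrow> \<sigma> x \<in> integral_closure V" for \<sigma> x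
      using gal_integral_closure V(2) by blast
  qed (simp_all add: id_in_gal inv_in_gal comp_in_gal assms(3))
  show ?thesis by (rule graded_jacobson_eq)
qed

end
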